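(* Let $M_{\mathrm{t}}, K, M_{\mathrm{r}}$ be positive integers and let $\bar{\mathbf{W}}=[\bar{\mathbf{W}}_1,\dots,\bar{\mathbf{W}}_K]\in\mathbb{C}^{M_{\mathrm{t}}\times KM_{\mathrm{r}}}$ be any (fully-digital beamforming) matrix of rank $T_{\mathrm{s}}\ge 1$. Let $\bar{\mathbf{W}}=\tilde{\mathbf{V}}_1\tilde{\mathbf{W}}_1$ be a QR decomposition with $\tilde{\mathbf{V}}_1\in\mathbb{C}^{M_{\mathrm{t}}\times T_{\mathrm{s}}}$ semi-unitary ($\tilde{\mathbf{V}}_1^H\tilde{\mathbf{V}}_1=\mathbf{I}_{T_{\mathrm{s}}}$) and $\tilde{\mathbf{W}}_1\in\mathbb{C}^{T_{\mathrm{s}}\times KM_{\mathrm{r}}}$ upper triangular. Let $\tilde{\mathbf{V}}_2=\tilde{\mathbf{V}}_1^H$ and let $\tilde{\mathbf{V}}_2=\tilde{\mathbf{W}}_2\tilde{\mathbf{P}}$ be a QR decomposition with $\tilde{\mathbf{W}}_2\in\mathbb{C}^{T_{\mathrm{s}}\times T_{\mathrm{s}}}$ unitary and $\tilde{\mathbf{P}}\in\mathbb{C}^{T_{\mathrm{s}}\times M_{\mathrm{t}}}$ upper triangular. Let $\mathbf{\Xi}\in\mathbb{C}^{T_{\mathrm{s}}\times T_{\mathrm{s}}}$ be the diagonal matrix whose $i$-th diagonal entry is one half of the largest modulus of the entries of the $i$-th column of $\tilde{\mathbf{P}}^H$, and define $\mathbf{P}\in\mathbb{C}^{M_{\mathrm{t}}\times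 T_{\mathrm{s}}}$ by $\tilde{\mathbf{P}}^H=\mathbf{P}\mathbf{\Xi}$, and $\mathbf{W}_{\mathrm{BB}}=\mathbf{\Xi}\tilde{\mathbf{W}}_2^H\tilde{\mathbf{W}}_1$. Then $\bar{\mathbf{W}}=\mathbf{P}\mathbf{W}_{\mathrm{BB}}$. Moreover, writing $\mathbf{P}^{[i,j]}=a_{[i,j]}e^{\jmath\vartheta_{[i,j]}}$ with amplitude $a_{[i,j]}\ge 0$ and phase $\vartheta_{[i,j]}$, each entry satisfies $\mathbf{P}^{[i,j]}=\mathbf{P}_1^{[i,j]}+\mathbf{P}_2^{[i,j]}$ with the unit-modulus numbers $$\mathbf{P}_1^{[i,j]}=e^{\jmath\left(\cos^{-1}\left(\frac{a_{[i,j]}}{2}\right)+\vartheta_{[i,j]}\right)},\qquad \mathbf{P}_2^{[i,j]}=e^{-\jmath\left(\cos^{-1}\left(\frac{a_{[i,j]}}{2}\right)-\vartheta_{[i,j]}\right)}.$$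
   Context: Setting: hybrid beamforming at a base station with $M_{\mathrm{t}}$ antennas, $T_{\mathrm{s}}$ active RF chains, and $K$ users each with $M_{\mathrm{r}}$ antennas. The analog beamformer $\mathbf{P}\in\mathbb{C}^{M_{\mathrm{t}}\times T_{\mathrm{s}}}$ must have each entry realizable as the sum of two unit-modulus (phase-shifter) complex numbers, i.e. $\mathbf{P}^{[i,j]}=\mathbf{P}_1^{[i,j]}+\mathbf{P}_2^{[i,j]}$ with $|\mathbf{P}_1^{[i,j]}|=|\mathbf{P}_2^{[i,j]}|=1$; $\mathbf{W}_{\mathrm{BB}}$ is the baseband digital beamformer. $\mathbf{X}^{[i,j]}$ denotes the $(i,j)$ entry of a matrix $\mathbf{X}$, $\jmath=\sqrt{-1}$, and $\cos^{-1}$ denotes the principal arccosine. *)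

theory Defs
  imports Complex_Main "Jordan_Normal_Form.Schur_Decomposition" "Jordan_Normal_Form.DL_Rank"
begin

definition half_max_col_diag :: "complex mat \<Rightarrow> complex mat" where
  "half_max_col_diag A = mat (dim_col A) (dim_col A)
     (\<lambda>(i,j). if i = j then complex_of_real (Max ((\<lambda>k. cmod (A $$ (k,i))) ` {..<dim_row A}) / 2) else 0)"

end

theory Submission
  imports Defs
begin

(* The factorisation is pure bookkeeping: P Xi W2^H W1 = Pt^H W2^H W1 = (W2 Pt)^H W1 = V1 W1.
   For the phase-shifter realisation, the rows of Pt are orthonormal, since Pt = W2^H V1^H with
   W2 unitary and V1 semi-unitary; hence no column of Pt^H vanishes, and dividing a column by
   half its largest modulus leaves entries of modulus a \<le> 2.
   For such a, with c = arccos (a/2), one has e^(i(c+t)) + e^(-i(c-t)) = 2 cos c e^(it) = a e^(it). *)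

lemma dim_row_mat_adjoint [simp]: "dim_row (mat_adjoint A) = dim_col A"
  and dim_col_mat_adjoint [simp]: "dim_col (mat_adjoint A) = dim_row A"
  unfolding mat_adjoint_def by auto

lemma index_mat_adjoint [simp]:
  "i < dim_col A \<Longrightarrow> j < dim_row A \<Longrightarrow> mat_adjoint A $$ (i, j) = conjugate (A $$ (j, i))"
  unfolding mat_adjoint_def by (auto simp: mat_of_rows_def)

lemma mat_adjoint_carrier [simp]: "A \<in> carrier_mat n m \<Longrightarrow> mat_adjoint A \<in> carrier_mat m n"
  by auto

lemma mat_adjoint_mat_adjoint [simp]: "mat_adjoint (mat_adjoint A) = A"
  by (rule eq_matI) auto

lemma mat_adjoint_mult:
  fixes A B :: "'a :: conjugatable_field mat"
  assumes "A \<in> carrier_mat n m" and "B \<in> carrier_mat m p"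
  shows "mat_adjoint (A * B) = mat_adjoint B * mat_adjoint A"
  using assms by (intro eq_matI)
    (auto simp: scalar_prod_def sum_conjugate conjugate_dist_mul mult.commute)

lemma mult_eq_of_adjoint_factorizations:
  fixes V W Q P D B :: "'a :: conjugatable_field mat"
  assumes W: "W \<in> carrier_mat k n" and Q: "Q \<in> carrier_mat n m"
    and P: "P \<in> carrier_mat m l" and D: "D \<in> carrier_mat l n" and B: "B \<in> carrier_mat k p"
    and V_adj: "mat_adjoint V = W * Q" and Q_adj: "mat_adjoint Q = P * D"
  shows "V * B = P * (D * mat_adjoint W * B)"
proof -
  have "P * (D * mat_adjoint W * B) = P * D * mat_adjoint W * B"
    using P D W B by (simp add: assoc_mult_mat[of _ m l _ n _ k] assoc_mult_mat[of _ m l _ k _ p])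
  also have "\<dots> = mat_adjoint (W * Q) * B"
    using Q_adj mat_adjoint_mult[OF W Q] by simp
  finally show ?thesis
    using V_adj by (metis mat_adjoint_mat_adjoint)
qed

lemma mult_mat_adjoint_eq_one_cancel_left:
  fixes W A :: "'a :: conjugatable_field mat"
  assumes W: "W \<in> carrier_mat k n" and A: "A \<in> carrier_mat n m"
    and W_isometry: "mat_adjoint W * W = 1\<^sub>m n"
    and WA_coisometry: "W * A * mat_adjoint (W * A) = 1\<^sub>m k"
  shows "A * mat_adjoint A = 1\<^sub>m n"
proof -
  let ?WA = "W * A" and ?WH = "mat_adjoint W"
  have WA: "?WA \<in> carrier_mat k m" and WH: "?WH \<in> carrier_mat n k"
    using W A by auto
  have A_eq: "A = ?WH * ?WA"
    using W_isometry assoc_mult_mat[OF WH W A] A by simp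
  have WAH: "mat_adjoint ?WA \<in> carrier_mat m k"
    using WA by auto
  have "A * mat_adjoint A = ?WH * ?WA * (mat_adjoint ?WA * W)"
    by (subst (1 2) A_eq) (simp add: mat_adjoint_mult[OF WH WA])
  also have "\<dots> = ?WH * (?WA * mat_adjoint ?WA * W)"
    using assoc_mult_mat[OF WH WA mult_carrier_mat[OF WAH W]] assoc_mult_mat[OF WA WAH W] by simp
  also have "\<dots> = ?WH * W"
    using WA_coisometry W by simp
  finally show ?thesis
    using W_isometry by simp
qed

lemma mult_mat_adjoint_eq_one_row_nonzero:
  fixes A :: "'a :: conjugatable_field mat"
  assumes A: "A \<in> carrier_mat n m" and coisometry: "A * mat_adjoint A = 1\<^sub>m n" and i: "i < n"
  shows "\<exists>k<m. A $$ (i, k) \<noteq> 0"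
proof (rule ccontr)
  assume "\<not> ?thesis"
  then have "(A * mat_adjoint A) $$ (i, i) = 0"
    using A i by (auto simp: scalar_prod_def)
  then show False
    using coisometry i by simp
qed

definition col_max_norm :: "complex mat \<Rightarrow> nat \<Rightarrow> real" where
  "col_max_norm A j = Max ((\<lambda>k. cmod (A $$ (k, j))) ` {..<dim_row A})"

lemma norm_le_col_max_norm: "i < dim_row A \<Longrightarrow> cmod (A $$ (i, j)) \<le> col_max_norm A j"
  unfolding col_max_norm_def by (intro Max_ge) auto

lemma col_max_norm_pos: "k < dim_row A \<Longrightarrow> A $$ (k, j) \<noteq> 0 \<Longrightarrow> 0 < col_max_norm A j"
  using norm_le_col_max_norm[of k A j] by (meson less_le_trans zero_less_norm_iff)

lemma dim_row_half_max_col_diag [simp]: "dim_row (half_max_col_diag A) = dim_col A"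
  and dim_col_half_max_col_diag [simp]: "dim_col (half_max_col_diag A) = dim_col A"
  unfolding half_max_col_diag_def by simp_all

lemma index_half_max_col_diag [simp]:
  "i < dim_col A \<Longrightarrow> j < dim_col A \<Longrightarrow>
    half_max_col_diag A $$ (i, j) = (if i = j then of_real (col_max_norm A j / 2) else 0)"
  unfolding half_max_col_diag_def col_max_norm_def by simp

lemma index_mult_half_max_col_diag:
  assumes P: "P \<in> carrier_mat m (dim_col A)" and i: "i < m" and j: "j < dim_col A"
  shows "(P * half_max_col_diag A) $$ (i, j) = P $$ (i, j) * of_real (col_max_norm A j / 2)"
proof -
  let ?c = "complex_of_real (col_max_norm A j / 2)"
  have "(P * half_max_col_diag A) $$ (i, j) = (\<Sum>l<dim_col A. P $$ (i, l) * (if l = j then ?c else 0))"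
    using P i j by (simp add: scalar_prod_def atLeast0LessThan)
  also have "\<dots> = (\<Sum>l<dim_col A. if l = j then P $$ (i, j) * ?c else 0)"
    by (rule sum.cong) auto
  also have "\<dots> = P $$ (i, j) * ?c"
    using j by simp
  finally show ?thesis .
qed

lemma norm_le_2_of_eq_mult_half_max_col_diag:
  assumes A_eq: "A = P * half_max_col_diag A" and P: "P \<in> carrier_mat (dim_row A) (dim_col A)"
    and i: "i < dim_row A" and j: "j < dim_col A"
    and col_nonzero: "\<exists>k<dim_row A. A $$ (k, j) \<noteq> 0"
  shows "cmod (P $$ (i, j)) \<le> 2"
proof -
  have pos: "0 < col_max_norm A j"
    using col_nonzero col_max_norm_pos by blast
  have A_ij: "A $$ (i, j) = P $$ (i, j) * of_real (col_max_norm A j / 2)"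
    using index_mult_half_max_col_diag[OF P i j] A_eq by simp
  have "cmod (P $$ (i, j)) * (col_max_norm A j / 2) = cmod (A $$ (i, j))"
    unfolding A_ij norm_mult norm_of_real using pos by simp
  also have "\<dots> \<le> col_max_norm A j"
    using i by (rule norm_le_col_max_norm)
  finally show ?thesis
    using pos by (simp add: field_simps)
qed

lemma norm_exp_i_times_of_real [simp]: "cmod (exp (\<i> * complex_of_real t)) = 1"
  by (simp flip: cis_conv_exp)

lemma of_real_mult_exp_eq_sum_of_phasors:
  fixes a \<theta> :: real
  assumes "0 \<le> a" and "a \<le> 2"
  shows "complex_of_real a * exp (\<i> * complex_of_real \<theta>) =
    exp (\<i> * complex_of_real (arccos (a / 2) + \<theta>)) + exp (- \<i> * complex_of_real (arccos (a / 2) - \<theta>))"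
proof -
  have cos_arccos_half: "cos (arccos (a / 2)) = a / 2"
    using assms by simp
  have "exp (\<i> * complex_of_real t) = cis t" and "exp (- \<i> * complex_of_real t) = cis (- t)" for t
    by (simp_all add: cis_conv_exp)
  then show ?thesis
    by (simp only:) (rule complex_eqI; simp add: cos_add sin_add cos_diff sin_diff cos_arccos_half algebra_simps)
qed

theorem proposition1:
  fixes Mt K Mr Ts :: nat
    and Wbar V1 W1 V2 W2 Pt Xi P WBB :: "complex mat"
  assumes "Mt > 0" and "K > 0" and "Mr > 0"
    and "Wbar \<in> carrier_mat Mt (K * Mr)"
    and "vec_space.rank Mt Wbar = Ts" and "Ts \<ge> 1"
    and "V1 \<in> carrier_mat Mt Ts" and "W1 \<in> carrier_mat Ts (K * Mr)"
    and "Wbar = V1 * W1" and "mat_adjoint V1 * V1 = 1\<^sub>m Ts" and "upper_triangular W1"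
    and "V2 = mat_adjoint V1"
    and "W2 \<in> carrier_mat Ts Ts" and "Pt \<in> carrier_mat Ts Mt"
    and "V2 = W2 * Pt"
    and "mat_adjoint W2 * W2 = 1\<^sub>m Ts" and "W2 * mat_adjoint W2 = 1\<^sub>m Ts"
    and "upper_triangular Pt"
    and "Xi = half_max_col_diag (mat_adjoint Pt)"
    and "P \<in> carrier_mat Mt Ts" and "mat_adjoint Pt = P * Xi"
    and "WBB = Xi * mat_adjoint W2 * W1"
  shows "Wbar = P * WBB \<and>
    (\<forall>i < Mt. \<forall>j < Ts. \<forall>(a::real) (\<theta>::real).
       a \<ge> 0 \<longrightarrow> P $$ (i,j) = complex_of_real a * exp (\<i> * complex_of_real \<theta>) \<longrightarrow>
       (let P1 = exp (\<i> * complex_of_real (arccos (a / 2) + \<theta>));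
            P2 = exp (- \<i> * complex_of_real (arccos (a / 2) - \<theta>))
        in P $$ (i,j) = P1 + P2 \<and> cmod P1 = 1 \<and> cmod P2 = 1))"
proof -
  have PtH_dims: "dim_row (mat_adjoint Pt) = Mt" "dim_col (mat_adjoint Pt) = Ts"
    using assms(14) by auto
  have Xi: "Xi \<in> carrier_mat Ts Ts"
    using assms(19) PtH_dims by auto
  have factorization: "Wbar = P * WBB"
    using mult_eq_of_adjoint_factorizations[OF assms(13,14,20) Xi assms(8)] assms(9,12,15,21,22)
    by simp
  have Pt_coisometry: "Pt * mat_adjoint Pt = 1\<^sub>m Ts"
    using mult_mat_adjoint_eq_one_cancel_left[OF assms(13,14,16)] assms(10,12,15) by simp
  have P_bound: "cmod (P $$ (i, j)) \<le> 2" if ij: "i < Mt" "j < Ts" for i j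
  proof (rule norm_le_2_of_eq_mult_half_max_col_diag)
    show "mat_adjoint Pt = P * half_max_col_diag (mat_adjoint Pt)"
      using assms(19,21) by simp
    obtain k where "k < Mt" "Pt $$ (j, k) \<noteq> 0"
      using mult_mat_adjoint_eq_one_row_nonzero[OF assms(14) Pt_coisometry \<open>j < Ts\<close>] by blast
    then show "\<exists>k<dim_row (mat_adjoint Pt). mat_adjoint Pt $$ (k, j) \<noteq> 0"
      using ij assms(14) by auto
  qed (use ij assms(20) PtH_dims in auto)
  show ?thesis
  proof (intro conjI factorization allI impI)
    fix i j a \<theta>
    assume ij: "i < Mt" "j < Ts" and "0 \<le> a"
      and P_polar: "P $$ (i, j) = complex_of_real a * exp (\<i> * complex_of_real \<theta>)"
    moreover have "a \<le> 2"
      using P_bound[OF ij] P_polar \<open>0 \<le> a\<close> by (simp add: norm_mult)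
    ultimately show "let P1 = exp (\<i> * complex_of_real (arccos (a / 2) + \<theta>));
        P2 = exp (- \<i> * complex_of_real (arccos (a / 2) - \<theta>))
      in P $$ (i, j) = P1 + P2 \<and> cmod P1 = 1 \<and> cmod P2 = 1"
      using of_real_mult_exp_eq_sum_of_phasors norm_exp_i_times_of_real[of "\<theta> - arccos (a / 2)"]
      by (simp add: Let_def)
  qed
qed

end
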